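(* The knowledge state algorithm $K_2$ for the $2$-cache problem is $\tfrac32$-competitive: there is a constant $K$ such that $E(\mathrm{cost}_{K_2}(\varrho))\le\tfrac32\,\mathrm{cost}_{\mathrm{opt}}(\varrho)+K$ for every finite request sequence $\varrho$.
   Context: The $k$-cache problem: there is an infinite set $P$ of pages; the state set $\mathcal X$ is the set of $k$-element subsets of $P$ (cache contents), with a given initial cache $s^0$; the requests are the pages, $\mathcal R=P$; $d(x,y)=|x\setminus y|$; and $\mathrm{cost}(x,r,y)=2$ if $x=y$ and $r\notin x$; $\mathrm{cost}(x,r,y)=d(x,y)$ if $r\in x$ or $r\in y$; $\mathrm{cost}(x,r,y)=d(x,y)+1$ otherwise. For $\varrho=r^1\dots r^n$, $\mathrm{cost}_{\mathrm{opt}}(\varrho)$ is the minimum of $\sum_t\mathrm{cost}(x^{t-1},r^t,x^t)$ over $x^1,\dots,x^n\in\mathcal X$ with $x^0=s^0$. $\Pi$ is the set of finitely supported probability distributions on $\mathcal X$; for $\pi,\pi'\in\Pi$, $\mathrm{cost}(\pi,r,\pi')$ is the minimum of $\sum_{x,y}\gamma(x,y)\mathrm{cost}(x,r,y)$ over distributions $\gamma$ on $\mathrm{supp}(\pi)\times\mathrm{supp}(\pi')$ with marginals $\pi,\pi'$. Bar notation: a string $\alpha$ of distinct page names and exactly $k$ bars, with at least $i$ page names to the left of the $i$-th bar, denotes the estimator $\omega_\alpha(y)=\min_{x\in S_\alpha}d(x,y)$, where $S_\alpha$ is the set of configurations $x$ such that for each $i=1,\dots,k$ at least $i$ elements of $x$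 are written to the left of the $i$-th bar. Algorithm $K_2$ ($k=2$; $a,b,c,d$ always denote distinct pages). It is a randomized algorithm whose state is a pair (distribution, estimator). States: $A^{a,b}=(\{a,b\},\ ab||)$ (point mass on $\{a,b\}$; $A^{a,b}=A^{b,a}$), and $B^{a,b,c}=(\tfrac12\{a,b\}+\tfrac12\{a,c\},\ a|bc|)$ ($B^{a,b,c}=B^{a,c,b}$). Initial state $A^{a,b}$ where $s^0=\{a,b\}$. Transitions: from $A^{a,b}$: request $a$ or $b$: stay; request $c\notin\{a,b\}$: go to $B^{c,a,b}$. From $B^{a,b,c}$: request $a$: stay; request $b$: go to $A^{b,a}$; request $c$: go to $A^{c,a}$; request $d\notin\{a,b,c\}$: go to each of $A^{d,a},A^{d,b},A^{d,c}$ with probability $\tfrac13$. The cost of a step from state $(\pi,\omega)$ on request $r$, whose successor states $(\pi_i,\omega_i)$ have probabilities $\lambda_i$, is $\mathrm{cost}(\pi,r,\sum_i\lambda_i\pi_i)$; $\mathrm{cost}_{K_2}(\varrho)$ is the (random) sum of step costs. *)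

theory Defs
  imports "HOL-Probability.Probability"
begin

text \<open>The 2-cache problem. Pages are elements of a type 'p (assumed infinite in the
theorem); configurations are 2-element sets of pages.\<close>

definition dist_conf :: "'p set \<Rightarrow> 'p set \<Rightarrow> nat" where
  "dist_conf x y = card (x - y)"

definition ccost :: "'p set \<Rightarrow> 'p \<Rightarrow> 'p set \<Rightarrow> nat" where
  "ccost x r y =
     (if x = y \<and> r \<notin> x then 2
      else if r \<in> x \<or> r \<in> y then dist_conf x y
      else dist_conf x y + 1)"

definition cost_opt :: "'p set \<Rightarrow> 'p list \<Rightarrow> nat" where
  "cost_opt s0 \<rho> = Inf {(\<Sum>t<length \<rho>. ccost (xs t) (\<rho> ! t) (xs (Suc t))) | xs.
        xs 0 = s0 \<and> (\<forall>t\<in>{1..length \<rho>}. card (xs t) = 2)}"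

definition tcost :: "'p set pmf \<Rightarrow> 'p \<Rightarrow> 'p set pmf \<Rightarrow> real" where
  "tcost \<pi> r \<pi>' = Inf {measure_pmf.expectation \<gamma> (\<lambda>(x, y). real (ccost x r y)) | \<gamma>.
        map_pmf fst \<gamma> = \<pi> \<and> map_pmf snd \<gamma> = \<pi>'}"

text \<open>States of K_2: KA {a,b} is A^{a,b}; KB a {b,c} is B^{a,b,c}.
The estimator component is determined by these parameters and does not affect costs.\<close>
datatype 'p kstate = KA "'p set" | KB 'p "'p set"

fun kdistr :: "'p kstate \<Rightarrow> 'p set pmf" where
  "kdistr (KA x) = return_pmf x"
| "kdistr (KB a y) = pmf_of_set ((\<lambda>z. {a, z}) ` y)"

fun ktrans :: "'p kstate \<Rightarrow> 'p \<Rightarrow> 'p kstate pmf" where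
  "ktrans (KA x) r = (if r \<in> x then return_pmf (KA x) else return_pmf (KB r x))"
| "ktrans (KB a y) r =
     (if r = a then return_pmf (KB a y)
      else if r \<in> y then return_pmf (KA {r, a})
      else pmf_of_set ((\<lambda>z. KA {r, z}) ` insert a y))"

definition kstep_cost :: "'p kstate \<Rightarrow> 'p \<Rightarrow> real" where
  "kstep_cost s r = tcost (kdistr s) r (bind_pmf (ktrans s r) kdistr)"

fun kexp_cost :: "'p kstate pmf \<Rightarrow> 'p list \<Rightarrow> real" where
  "kexp_cost D [] = 0"
| "kexp_cost D (r # rs) =
     measure_pmf.expectation D (\<lambda>s. kstep_cost s r)
     + kexp_cost (bind_pmf D (\<lambda>s. ktrans s r)) rs"

end

theory Submission
  imports Defs
begin

(* Amortized analysis with the potential Phi(s, x): 3/2 times the estimator of the algorithm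
   state s evaluated at the adversary's configuration x, plus 1/2 if s is a B-state.  Every
   request satisfies  E[step cost] + E[Phi after] <= Phi before + 3/2 * (adversary's cost).
   Summing along an optimal offline schedule, with Phi = 0 initially and Phi >= 0 throughout,
   bounds the expected cost of K_2 by 3/2 * cost_opt, so K = 0 works. *)

lemma card_2_finite_nonempty: "card x = 2 \<Longrightarrow> finite x \<and> x \<noteq> {}"
  using card_ge_0_finite by force

lemma expectation_mono_finite_pmf:
  fixes f g :: "'a \<Rightarrow> real"
  assumes "finite (set_pmf p)" "\<And>x. x \<in> set_pmf p \<Longrightarrow> f x \<le> g x"
  shows "measure_pmf.expectation p f \<le> measure_pmf.expectation p g"
  by (rule integral_mono_AE) (auto simp: AE_measure_pmf_iff assms integrable_measure_pmf_finite)

lemma expectation_le_const_finite_pmf: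
  fixes f :: "'a \<Rightarrow> real"
  assumes "finite (set_pmf p)" "\<And>x. x \<in> set_pmf p \<Longrightarrow> f x \<le> c"
  shows "measure_pmf.expectation p f \<le> c"
  using expectation_mono_finite_pmf[of p f "\<lambda>_. c"] assms by simp

lemma expectation_add_const_finite_pmf:
  fixes f :: "'a \<Rightarrow> real"
  assumes "finite (set_pmf p)"
  shows "measure_pmf.expectation p (\<lambda>x. f x + c) = measure_pmf.expectation p f + c"
  using assms by (simp add: Bochner_Integration.integral_add integrable_measure_pmf_finite)

lemma expectation_bind_pmf_finite:
  fixes h :: "'b \<Rightarrow> real"
  assumes "finite (set_pmf p)" "\<And>x. x \<in> set_pmf p \<Longrightarrow> finite (set_pmf (f x))"
  shows "measure_pmf.expectation (p \<bind> f) h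
         = measure_pmf.expectation p (\<lambda>x. measure_pmf.expectation (f x) h)"
  using assms
  by (simp add: pmf_expectation_bind[of "set_pmf p"] integral_measure_pmf[of "set_pmf p"])

lemma tcost_le_coupling:
  assumes "map_pmf fst \<gamma> = \<pi>" "map_pmf snd \<gamma> = \<pi>'"
  shows "tcost \<pi> r \<pi>' \<le> measure_pmf.expectation \<gamma> (\<lambda>(x, y). real (ccost x r y))"
  unfolding tcost_def
proof (rule cInf_lower)
  show "bdd_below {measure_pmf.expectation \<gamma> (\<lambda>(x, y). real (ccost x r y)) | \<gamma>.
        map_pmf fst \<gamma> = \<pi> \<and> map_pmf snd \<gamma> = \<pi>'}"
    by (rule bdd_belowI[where m=0]) (auto intro!: integral_nonneg simp: split_beta)
qed (use assms in blast)

lemma kstep_cost_le_coupling: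
  assumes "map_pmf fst \<gamma> = kdistr s" "map_pmf snd \<gamma> = ktrans s r \<bind> kdistr"
    and "finite (set_pmf \<gamma>)" "\<And>x y. (x, y) \<in> set_pmf \<gamma> \<Longrightarrow> real (ccost x r y) \<le> c"
  shows "kstep_cost s r \<le> c"
proof -
  have "kstep_cost s r \<le> measure_pmf.expectation \<gamma> (\<lambda>(x, y). real (ccost x r y))"
    unfolding kstep_cost_def by (rule tcost_le_coupling[OF assms(1,2)])
  also have "\<dots> \<le> c"
    by (rule expectation_le_const_finite_pmf[OF assms(3)]) (use assms(4) in auto)
  finally show ?thesis .
qed

lemma cost_opt_attained:
  assumes "card s0 = 2"
  obtains xs where "xs 0 = s0" "\<forall>t\<le>length \<rho>. card (xs t) = 2"
    "cost_opt s0 \<rho> = (\<Sum>t<length \<rho>. ccost (xs t) (\<rho> ! t) (xs (Suc t)))"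
proof -
  let ?S = "{(\<Sum>t<length \<rho>. ccost (xs t) (\<rho> ! t) (xs (Suc t))) | xs.
        xs 0 = s0 \<and> (\<forall>t\<in>{1..length \<rho>}. card (xs t) = 2)}"
  have "?S \<noteq> {}"
    using assms by (auto intro!: exI[of _ "\<lambda>_. s0"])
  then have "cost_opt s0 \<rho> \<in> ?S"
    unfolding cost_opt_def by (rule Inf_nat_def1)
  then obtain xs where "xs 0 = s0" "\<forall>t\<in>{1..length \<rho>}. card (xs t) = 2"
    "cost_opt s0 \<rho> = (\<Sum>t<length \<rho>. ccost (xs t) (\<rho> ! t) (xs (Suc t)))"
    by blast
  moreover from this(1,2) have "\<forall>t\<le>length \<rho>. card (xs t) = 2"
    using assms by (auto simp: less_eq_nat.simps split: nat.splits)
  ultimately show thesis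
    using that by blast
qed

lemma ccost_split_at_request:
  assumes x: "card x = 2" and y: "card y = 2"
  obtains z where "card z = 2" "r \<in> z" "dist_conf x z + dist_conf z y \<le> ccost x r y"
proof -
  consider "r \<in> x" | "r \<in> y" | "r \<notin> x" "r \<notin> y" by blast
  then show thesis
  proof cases
    case 1
    then show thesis using x by (intro that[of x]) (auto simp: ccost_def dist_conf_def)
  next
    case 2
    then show thesis using y by (intro that[of y]) (auto simp: ccost_def dist_conf_def)
  next
    case 3
    have fx: "finite x" using x card_2_finite_nonempty by blast
    obtain u where u: "u \<in> x" "x \<noteq> y \<longrightarrow> u \<notin> y"
    proof (cases "x = y")
      case True
      then show thesis using x that by force
    next
      case False
      then have "\<not> x \<subseteq> y" using x y card_2_finite_nonempty card_subset_eq by metis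
      then show thesis using that by blast
    qed
    define z where "z = insert r (x - {u})"
    have "card z = 2" unfolding z_def using fx x u 3 by (simp add: card_insert_if)
    moreover have "dist_conf x z = 1"
    proof -
      have "x - z = {u}" unfolding z_def using u 3 by auto
      then show ?thesis by (simp add: dist_conf_def)
    qed
    moreover have "dist_conf z y \<le> (if x = y then 1 else dist_conf x y)"
    proof -
      have "z - y = insert r (x - {u} - y)" unfolding z_def using 3 by auto
      then have "card (z - y) = Suc (card (x - {u} - y))" using fx 3 by simp
      moreover have "x - y = insert u (x - {u} - y)" if "x \<noteq> y" using u that by auto
      ultimately show ?thesis using fx by (auto simp: dist_conf_def)
    qed
    moreover have "ccost x r y = (if x = y then 2 else dist_conf x y + 1)"
      using 3 by (auto simp: ccost_def)
    ultimately show thesis using 3 by (intro that[of z]) (auto simp: z_def split: if_splits)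
  qed
qed

fun wf_kstate :: "'p kstate \<Rightarrow> bool" where
  "wf_kstate (KA X) \<longleftrightarrow> card X = 2"
| "wf_kstate (KB a Y) \<longleftrightarrow> card Y = 2 \<and> a \<notin> Y"

definition wf_kdist :: "'p kstate pmf \<Rightarrow> bool" where
  "wf_kdist D \<longleftrightarrow> finite (set_pmf D) \<and> (\<forall>s\<in>set_pmf D. wf_kstate s)"

text \<open>The estimator ab|| of KA {a, b} is card ({a, b} - x); the estimator a|bc| of KB a {b, c}
is 0, 2 or 1 in the three cases below.\<close>
fun kpotential :: "'p kstate \<Rightarrow> 'p set \<Rightarrow> real" where
  "kpotential (KA X) x = 3/2 * real (card (X - x))"
| "kpotential (KB a Y) x =
     (if a \<in> x \<and> x \<subseteq> insert a Y then 1/2 else if x \<inter> insert a Y = {} then 5/2 else 2)"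

lemma kpotential_nonneg: "0 \<le> kpotential s x"
  by (cases s) auto

lemma kpotential_lipschitz:
  assumes s: "wf_kstate s" and z: "card z = 2" and y: "card y = 2"
  shows "kpotential s y \<le> kpotential s z + 3/2 * dist_conf z y"
proof (cases s)
  case (KA X)
  have "card (X - y) \<le> card ((X - z) \<union> (z - y))"
    using s z KA card_2_finite_nonempty by (intro card_mono) auto
  also have "\<dots> \<le> card (X - z) + card (z - y)" by (rule card_Un_le)
  finally show ?thesis using KA by (simp add: dist_conf_def)
next
  case (KB a Y)
  consider "z = y" | "dist_conf z y = 2" | "1 \<le> dist_conf z y" "kpotential s y \<le> kpotential s z + 3/2"
  proof (cases "dist_conf z y = 0")
    case True
    then have "z \<subseteq> y" using card_2_finite_nonempty[OF z] by (auto simp: dist_conf_def)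
    then show thesis using that(1) z y card_2_finite_nonempty card_subset_eq by metis
  next
    case False
    then show thesis
    proof (cases "a \<in> z \<and> z \<subseteq> insert a Y \<and> y \<inter> insert a Y = {}")
      case True
      then have "z - y = z" by auto
      then show thesis using that(2) z by (simp add: dist_conf_def)
    qed (use that(3) KB in auto)
  qed
  then show ?thesis
  proof cases
    case 2
    then show ?thesis using KB by auto
  qed auto
qed

lemma kstep_cost_KA_hit: "r \<in> X \<Longrightarrow> kstep_cost (KA X) r \<le> 0"
  by (rule kstep_cost_le_coupling[of "return_pmf (X, X)"])
    (auto simp: bind_return_pmf ccost_def dist_conf_def)

lemma kstep_cost_KA_miss:
  assumes X: "card X = 2" and r: "r \<notin> X"
  shows "kstep_cost (KA X) r \<le> 1"
proof (rule kstep_cost_le_coupling[of "map_pmf (\<lambda>z. (X, {r, z})) (pmf_of_set X)"])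
  have fX: "finite X" "X \<noteq> {}" using X card_2_finite_nonempty by auto
  have "inj_on (\<lambda>z. {r, z}) X" using r by (auto simp: inj_on_def doubleton_eq_iff)
  then show "map_pmf snd (map_pmf (\<lambda>z. (X, {r, z})) (pmf_of_set X)) = ktrans (KA X) r \<bind> kdistr"
    using r fX by (auto simp: map_pmf_comp bind_return_pmf map_pmf_of_set_inj)
  obtain a b where "X = {a, b}" "a \<noteq> b" using X card_2_iff by metis
  then show "real (ccost x r y) \<le> 1"
    if "(x, y) \<in> set_pmf (map_pmf (\<lambda>z. (X, {r, z})) (pmf_of_set X))" for x y
    using that r by (auto simp: ccost_def dist_conf_def insert_Diff_if)
qed (use X card_2_finite_nonempty[OF X] in \<open>auto simp: map_pmf_comp\<close>)

lemma kstep_cost_KB_hit_first: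
  assumes "card Y = 2"
  shows "kstep_cost (KB a Y) a \<le> 0"
  by (rule kstep_cost_le_coupling[of "map_pmf (\<lambda>w. (w, w)) (kdistr (KB a Y))"])
    (use card_2_finite_nonempty[OF assms] in
      \<open>auto simp: map_pmf_comp bind_return_pmf ccost_def dist_conf_def\<close>)

lemma kstep_cost_KB_hit_second:
  assumes Y: "card Y = 2" and a: "a \<notin> Y" and r: "r \<in> Y"
  shows "kstep_cost (KB a Y) r \<le> 1/2"
proof -
  obtain c where Yc: "Y = {r, c}" "r \<noteq> c"
    using Y r card_2_iff by (metis doubleton_eq_iff insertE singletonD)
  have "a \<noteq> r" "a \<noteq> c" using a Yc by auto
  have "kstep_cost (KB a Y) r = tcost (kdistr (KB a Y)) r (return_pmf {r, a})"
    using r a by (auto simp: kstep_cost_def bind_return_pmf)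
  also have "\<dots> \<le> measure_pmf.expectation (map_pmf (\<lambda>w. (w, {r, a})) (kdistr (KB a Y)))
                    (\<lambda>(x, y). real (ccost x r y))"
    by (rule tcost_le_coupling) (auto simp: map_pmf_comp)
  also have "\<dots> = 1/2"
    using Yc \<open>a \<noteq> r\<close> \<open>a \<noteq> c\<close>
    by (simp add: integral_pmf_of_set ccost_def dist_conf_def insert_Diff_if doubleton_eq_iff
        card_insert_if)
  finally show ?thesis .
qed

lemma ktrans_KB_miss:
  assumes "card Y = 2" and r: "r \<notin> insert a Y"
  shows "ktrans (KB a Y) r = map_pmf (\<lambda>z. KA {r, z}) (pmf_of_set (insert a Y))"
proof -
  have "inj_on (\<lambda>z. KA {r, z}) (insert a Y)" using r by (auto simp: inj_on_def doubleton_eq_iff)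
  then show ?thesis using r card_2_finite_nonempty[OF assms(1)] by (simp add: map_pmf_of_set_inj)
qed

lemma kstep_cost_KB_miss:
  assumes Y: "card Y = 2" and a: "a \<notin> Y" and r: "r \<notin> insert a Y"
  shows "kstep_cost (KB a Y) r \<le> 1"
proof -
  have fY: "finite Y" "Y \<noteq> {}" using Y card_2_finite_nonempty by auto
  define P where "P = pmf_of_set (insert a Y)"
  define G where "G z = (if z \<in> Y then return_pmf z else pmf_of_set Y)" for z
  \<comment> \<open>The target {r, z} is reached from {a, z} if z \<in> Y, and from {a, w} with w uniform on Y
    if z = a; each such move costs 1.\<close>
  define \<gamma> where "\<gamma> = P \<bind> (\<lambda>z. map_pmf (\<lambda>w. ({a, w}, {r, z})) (G z))"
  have "P \<bind> G = pmf_of_set Y"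
    by (rule pmf_eqI) (use a fY Y in \<open>auto simp: P_def G_def pmf_bind_pmf_of_set indicator_def\<close>)
  moreover have "inj_on (\<lambda>w. {a, w}) Y" using a by (auto simp: inj_on_def doubleton_eq_iff)
  ultimately have "map_pmf fst \<gamma> = kdistr (KB a Y)"
    by (simp add: \<gamma>_def map_bind_pmf map_pmf_comp map_pmf_of_set_inj fY
        flip: map_bind_pmf[of "\<lambda>w. {a, w}"])
  moreover have "map_pmf snd \<gamma> = ktrans (KB a Y) r \<bind> kdistr"
  proof -
    have "map_pmf snd \<gamma> = P \<bind> (\<lambda>z. return_pmf {r, z})"
      by (simp add: \<gamma>_def map_bind_pmf map_pmf_comp)
    also have "\<dots> = ktrans (KB a Y) r \<bind> kdistr"
      unfolding ktrans_KB_miss[OF Y r] bind_map_pmf P_def by simp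
    finally show ?thesis .
  qed
  moreover have "finite (set_pmf \<gamma>)"
    using fY by (auto simp: \<gamma>_def P_def G_def set_bind_pmf)
  moreover have "real (ccost x r y) \<le> 1" if "(x, y) \<in> set_pmf \<gamma>" for x y
  proof -
    have "(x, y) \<in> (\<Union>z\<in>insert a Y. (\<lambda>w. ({a, w}, {r, z})) ` set_pmf (G z))"
      using that fY by (simp add: \<gamma>_def P_def set_bind_pmf)
    then obtain z w where zw: "z \<in> insert a Y" "w \<in> set_pmf (G z)" "x = {a, w}" "y = {r, z}"
      by blast
    then have "z = a \<and> w \<in> Y \<or> z \<in> Y \<and> w = z"
      using fY by (auto simp: G_def split: if_splits)
    with zw(3,4) show ?thesis
      using Y a r card_2_iff[of Y]
      by (auto simp: ccost_def dist_conf_def insert_Diff_if doubleton_eq_iff)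
  qed
  ultimately show ?thesis by (rule kstep_cost_le_coupling)
qed

lemma wf_kstate_ktrans:
  assumes "wf_kstate s" "s' \<in> set_pmf (ktrans s r)"
  shows "wf_kstate s'"
proof (cases s)
  case (KA X)
  then show ?thesis using assms by (auto split: if_splits)
next
  case (KB a Y)
  then show ?thesis
    using assms card_2_finite_nonempty[of Y] by (auto split: if_splits simp: card_insert_if)
qed

lemma finite_set_pmf_ktrans: "wf_kstate s \<Longrightarrow> finite (set_pmf (ktrans s r))"
  by (cases s) (auto dest: card_2_finite_nonempty)

lemma wf_kdist_bind_ktrans: "wf_kdist D \<Longrightarrow> wf_kdist (D \<bind> (\<lambda>s. ktrans s r))"
  by (auto simp: wf_kdist_def set_bind_pmf finite_set_pmf_ktrans wf_kstate_ktrans)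

lemma amortized_service_KA:
  assumes X: "card X = 2" and x: "card x = 2" "r \<in> x"
  shows "kstep_cost (KA X) r + measure_pmf.expectation (ktrans (KA X) r) (\<lambda>s. kpotential s x)
         \<le> kpotential (KA X) x"
proof (cases "r \<in> X")
  case True
  then show ?thesis using kstep_cost_KA_hit[OF True] by simp
next
  case False
  obtain a b where ab: "X = {a, b}" "a \<noteq> b" using X card_2_iff by metis
  obtain w where xw: "x = {r, w}" "w \<noteq> r"
    using x card_2_iff by (metis doubleton_eq_iff insertE singletonD)
  have "1 + kpotential (KB r X) x \<le> kpotential (KA X) x"
    using False ab xw by (cases "w = a"; cases "w = b") (auto simp: insert_Diff_if)
  then show ?thesis using kstep_cost_KA_miss[OF X False] False by simp
qed

lemma amortized_service_KB:
  assumes Y: "card Y = 2" "a \<notin> Y" and x: "card x = 2" "r \<in> x"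
  shows "kstep_cost (KB a Y) r + measure_pmf.expectation (ktrans (KB a Y) r) (\<lambda>s. kpotential s x)
         \<le> kpotential (KB a Y) x"
proof -
  obtain b c where bc: "Y = {b, c}" "b \<noteq> c" using Y card_2_iff by metis
  obtain w where xw: "x = {r, w}" "w \<noteq> r"
    using x card_2_iff by (metis doubleton_eq_iff insertE singletonD)
  consider "r = a" | "r \<in> Y" | "r \<notin> insert a Y" by blast
  then show ?thesis
  proof cases
    case 1
    then show ?thesis using kstep_cost_KB_hit_first[OF Y(1)] by simp
  next
    case 2
    have "1/2 + kpotential (KA {r, a}) x \<le> kpotential (KB a Y) x"
      using 2 Y bc xw by (cases "w = a"; cases "w = b"; cases "w = c") (auto simp: insert_Diff_if)
    moreover have "r \<noteq> a" using 2 Y by auto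
    ultimately show ?thesis using kstep_cost_KB_hit_second[OF Y 2] 2 by simp
  next
    case 3
    have "measure_pmf.expectation (ktrans (KB a Y) r) (\<lambda>s. kpotential s x)
          = (\<Sum>z\<in>insert a Y. kpotential (KA {r, z}) x) / 3"
      unfolding ktrans_KB_miss[OF Y(1) 3] using bc Y by (simp add: integral_pmf_of_set)
    moreover have "1 + (\<Sum>z\<in>insert a Y. kpotential (KA {r, z}) x) / 3 \<le> kpotential (KB a Y) x"
      using 3 Y bc xw by (cases "w = a"; cases "w = b"; cases "w = c") (auto simp: insert_Diff_if)
    ultimately show ?thesis using kstep_cost_KB_miss[OF Y 3] by simp
  qed
qed

lemma amortized_service:
  assumes "wf_kstate s" "card x = 2" "r \<in> x"
  shows "kstep_cost s r + measure_pmf.expectation (ktrans s r) (\<lambda>s'. kpotential s' x)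
         \<le> kpotential s x"
proof (cases s)
  case (KA X)
  show ?thesis unfolding KA by (rule amortized_service_KA) (use assms KA in auto)
next
  case (KB a Y)
  show ?thesis unfolding KB by (rule amortized_service_KB) (use assms KB in auto)
qed

text \<open>Route the adversary's move from x to y through a configuration z containing the request:
the algorithm pays for the part x \<rightarrow> z by the service inequality, and the part z \<rightarrow> y raises
the potential by at most 3/2 per page.\<close>
lemma amortized_step:
  assumes s: "wf_kstate s" and x: "card x = 2" and y: "card y = 2"
  shows "kstep_cost s r + measure_pmf.expectation (ktrans s r) (\<lambda>s'. kpotential s' y)
         \<le> kpotential s x + 3/2 * real (ccost x r y)"
proof -
  obtain z where z: "card z = 2" "r \<in> z" "dist_conf x z + dist_conf z y \<le> ccost x r y"
    using ccost_split_at_request[OF x y] .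
  have fin: "finite (set_pmf (ktrans s r))" using s by (rule finite_set_pmf_ktrans)
  have "measure_pmf.expectation (ktrans s r) (\<lambda>s'. kpotential s' y)
        \<le> measure_pmf.expectation (ktrans s r) (\<lambda>s'. kpotential s' z + 3/2 * real (dist_conf z y))"
    using fin by (rule expectation_mono_finite_pmf)
      (rule kpotential_lipschitz[OF wf_kstate_ktrans[OF s] z(1) y])
  also have "\<dots> = measure_pmf.expectation (ktrans s r) (\<lambda>s'. kpotential s' z)
                  + 3/2 * real (dist_conf z y)"
    using fin by (rule expectation_add_const_finite_pmf)
  finally show ?thesis
    using amortized_service[OF s z(1,2)] kpotential_lipschitz[OF s x z(1)] z(3) by linarith
qed

lemma expected_amortized_step:
  assumes D: "wf_kdist D" and x: "card x = 2" and y: "card y = 2"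
  shows "measure_pmf.expectation D (\<lambda>s. kstep_cost s r)
         + measure_pmf.expectation (D \<bind> (\<lambda>s. ktrans s r)) (\<lambda>s. kpotential s y)
         \<le> measure_pmf.expectation D (\<lambda>s. kpotential s x) + 3/2 * real (ccost x r y)"
proof -
  have fin: "finite (set_pmf D)" and wf: "\<And>s. s \<in> set_pmf D \<Longrightarrow> wf_kstate s"
    using D by (auto simp: wf_kdist_def)
  have "measure_pmf.expectation D (\<lambda>s. kstep_cost s r)
        + measure_pmf.expectation (D \<bind> (\<lambda>s. ktrans s r)) (\<lambda>s. kpotential s y)
        = measure_pmf.expectation D (\<lambda>s. kstep_cost s r
            + measure_pmf.expectation (ktrans s r) (\<lambda>s'. kpotential s' y))"
    using fin
    by (simp add: expectation_bind_pmf_finite[OF fin finite_set_pmf_ktrans[OF wf]]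
        Bochner_Integration.integral_add integrable_measure_pmf_finite)
  also have "\<dots> \<le> measure_pmf.expectation D (\<lambda>s. kpotential s x + 3/2 * real (ccost x r y))"
    using fin by (rule expectation_mono_finite_pmf) (rule amortized_step[OF wf x y])
  also have "\<dots> = measure_pmf.expectation D (\<lambda>s. kpotential s x) + 3/2 * real (ccost x r y)"
    using fin by (rule expectation_add_const_finite_pmf)
  finally show ?thesis .
qed

lemma kexp_cost_le_schedule:
  assumes "wf_kdist D" "\<forall>t\<le>length \<rho>. card (xs t) = 2"
  shows "kexp_cost D \<rho> \<le> 3/2 * (\<Sum>t<length \<rho>. real (ccost (xs t) (\<rho> ! t) (xs (Suc t))))
           + measure_pmf.expectation D (\<lambda>s. kpotential s (xs 0))"
  using assms
proof (induction \<rho> arbitrary: D xs)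
  case Nil
  then show ?case by (simp add: integral_nonneg_AE kpotential_nonneg)
next
  case (Cons r \<rho>)
  let ?D' = "D \<bind> (\<lambda>s. ktrans s r)"
  have "kexp_cost ?D' \<rho> \<le> 3/2 * (\<Sum>t<length \<rho>. real (ccost (xs (Suc t)) (\<rho> ! t) (xs (Suc (Suc t)))))
           + measure_pmf.expectation ?D' (\<lambda>s. kpotential s (xs (Suc 0)))"
    using Cons.IH[OF wf_kdist_bind_ktrans[OF Cons.prems(1)], of "\<lambda>t. xs (Suc t)"] Cons.prems(2)
    by auto
  moreover have "measure_pmf.expectation D (\<lambda>s. kstep_cost s r)
         + measure_pmf.expectation ?D' (\<lambda>s. kpotential s (xs (Suc 0)))
         \<le> measure_pmf.expectation D (\<lambda>s. kpotential s (xs 0))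
           + 3/2 * real (ccost (xs 0) r (xs (Suc 0)))"
    using Cons.prems by (intro expected_amortized_step) auto
  moreover have "(\<Sum>t<length (r # \<rho>). real (ccost (xs t) ((r # \<rho>) ! t) (xs (Suc t))))
      = real (ccost (xs 0) r (xs (Suc 0)))
        + (\<Sum>t<length \<rho>. real (ccost (xs (Suc t)) (\<rho> ! t) (xs (Suc (Suc t)))))"
    by (simp only: length_Cons sum.lessThan_Suc_shift nth_Cons_0 nth_Cons_Suc)
  ultimately show ?case
    by (simp only: kexp_cost.simps distrib_left)
qed

theorem mainTheorem10:
  fixes s0 :: "'p set"
  assumes "infinite (UNIV :: 'p set)"
    and "card s0 = 2"
  shows "\<exists>K::real. \<forall>\<rho> :: 'p list.
           kexp_cost (return_pmf (KA s0)) \<rho> \<le> 3 / 2 * real (cost_opt s0 \<rho>) + K"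
proof (intro exI allI)
  fix \<rho> :: "'p list"
  obtain xs where xs: "xs 0 = s0" "\<forall>t\<le>length \<rho>. card (xs t) = 2"
    and opt: "cost_opt s0 \<rho> = (\<Sum>t<length \<rho>. ccost (xs t) (\<rho> ! t) (xs (Suc t)))"
    using cost_opt_attained[OF assms(2)] .
  have "wf_kdist (return_pmf (KA s0))"
    using assms(2) by (simp add: wf_kdist_def)
  from kexp_cost_le_schedule[OF this xs(2)]
  show "kexp_cost (return_pmf (KA s0)) \<rho> \<le> 3 / 2 * real (cost_opt s0 \<rho>) + 0"
    by (simp add: opt xs(1))
qed

end
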